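(* Let $\bm D\in\mathbb R^{n\times d}$ ($n\le d$) satisfy $\bm D\bm D^\top=\bm I_n$, let $\bar{\bm D}\in\mathbb R^{(d-n)\times d}$ satisfy $\bar{\bm D}\bm D^\top=\bm 0$, $\bar{\bm D}\bar{\bm D}^\top=\bm I_{d-n}$, and let $\bm A\in\mathbb R^{m\times n}$. Let $s_1,s_2$ be positive integers with $s_1,s_2\le n$ and let $\eta>0$. Suppose $\bm u,\bm v\in\mathbb R^d$ satisfy $\mathrm{supp}(\bm u)\cap\mathrm{supp}(\bm v)=\emptyset$, $\bm u$ is $s_1$-sparse, $\|\bm v\|_1-\|\bm v\|_2\le(s_2-\sqrt{s_2})\eta$ and $\|\bm v\|_\infty\le\eta$. Then $$|\langle\bm A\bm D\bm u,\bm A\bm D\bm v\rangle+\langle\bar{\bm D}\bm u,\bar{\bm D}\bm v\rangle|\le\Big(1+\frac{\sqrt2}{2}\Big)\eta\sqrt{s_2}\,\theta_{s_1,s_2}\|\bm u\|_2.$$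
   Context: A vector is $s$-sparse if it has at most $s$ nonzero entries; $\mathrm{supp}(\bm v)$ is the set of indices of nonzero entries. The $\bm D$-restricted orthogonality constant $\theta_{s,t}$ (for $\bm A$ and $\bm D$) is the smallest nonnegative number such that $|\langle\bm A\bm D\bm u,\bm A\bm D\bm v\rangle-\langle\bm D\bm u,\bm D\bm v\rangle|\le\theta_{s,t}\|\bm u\|_2\|\bm v\|_2$ for all $s$-sparse $\bm u\in\mathbb R^d$ and $t$-sparse $\bm v\in\mathbb R^d$. *)

theory Defs
  imports Complex_Main "Jordan_Normal_Form.Matrix"
begin

definition supp_vec :: "real vec \<Rightarrow> nat set" where
  "supp_vec v = {i. i < dim_vec v \<and> v $ i \<noteq> 0}"

definition sparse_vec :: "nat \<Rightarrow> real vec \<Rightarrow> bool" where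
  "sparse_vec s v \<longleftrightarrow> card (supp_vec v) \<le> s"

definition norm2_vec :: "real vec \<Rightarrow> real" where
  "norm2_vec v = sqrt (v \<bullet> v)"

definition norm1_vec :: "real vec \<Rightarrow> real" where
  "norm1_vec v = (\<Sum>i<dim_vec v. \<bar>v $ i\<bar>)"

definition norminf_vec :: "real vec \<Rightarrow> real" where
  "norminf_vec v = Max (insert 0 {\<bar>v $ i\<bar> | i. i < dim_vec v})"

definition D_ROC :: "real mat \<Rightarrow> real mat \<Rightarrow> nat \<Rightarrow> nat \<Rightarrow> real" where
  "D_ROC A D s t = Inf {c. c \<ge> 0 \<and>
     (\<forall>u v. u \<in> carrier_vec (dim_col D) \<longrightarrow> v \<in> carrier_vec (dim_col D) \<longrightarrow>
        sparse_vec s u \<longrightarrow> sparse_vec t v \<longrightarrow>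
        \<bar>(A *\<^sub>v (D *\<^sub>v u)) \<bullet> (A *\<^sub>v (D *\<^sub>v v)) - (D *\<^sub>v u) \<bullet> (D *\<^sub>v v)\<bar>
          \<le> c * norm2_vec u * norm2_vec v)}"

end

theory Submission
  imports Defs "Jordan_Normal_Form.Determinant" "HOL-Analysis.L2_Norm"
begin

text \<open>
  By \<open>D\<^sup>T D + Dbar\<^sup>T Dbar = I\<close> (the stacked matrix \<open>[D; Dbar]\<close> is orthogonal) and
  \<open>\<langle>u, v\<rangle> = 0\<close>, the left-hand side is \<open>\<langle>g, v\<rangle>\<close> with \<open>g = (D\<^sup>T A\<^sup>T A D - D\<^sup>T D) u\<close>.
  Since \<open>\<parallel>v\<parallel>\<^sub>2\<^sup>2 \<le> \<eta> \<parallel>v\<parallel>\<^sub>1\<close>, the hypothesis on \<open>\<parallel>v\<parallel>\<^sub>1 - \<parallel>v\<parallel>\<^sub>2\<close> becomes a quadratic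
  inequality forcing \<open>\<parallel>v\<parallel>\<^sub>2 \<le> \<surd>s\<^sub>2 \<eta>\<close>, hence \<open>\<parallel>v\<parallel>\<^sub>1 \<le> s\<^sub>2 \<eta>\<close>. A vector with entries bounded by
  \<open>\<eta>\<close> and \<open>\<ell>\<^sub>1\<close>-mass at most \<open>s\<^sub>2 \<eta>\<close> pairs with \<open>|g|\<close> at most as well as \<open>\<eta>\<close> times the indicator
  of the set \<open>S\<close> of the \<open>s\<^sub>2\<close> largest entries of \<open>|g|\<close>, so
  \<open>|\<langle>g, v\<rangle>| \<le> \<eta> \<parallel>g\<^sub>S\<parallel>\<^sub>1 \<le> \<eta> \<surd>s\<^sub>2 \<parallel>g\<^sub>S\<parallel>\<^sub>2\<close>. Testing \<open>g\<close> against the \<open>s\<^sub>2\<close>-sparse vector \<open>g\<^sub>S\<close> gives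
  \<open>\<parallel>g\<^sub>S\<parallel>\<^sub>2\<^sup>2 = \<langle>g, g\<^sub>S\<rangle> \<le> \<theta> \<parallel>u\<parallel>\<^sub>2 \<parallel>g\<^sub>S\<parallel>\<^sub>2\<close>. The resulting bound holds even without the
  factor \<open>1 + \<surd>2/2\<close>.
\<close>

lemma norm2_vec_eq_L2_set: "norm2_vec x = L2_set (($) x) {..<dim_vec x}"
  unfolding norm2_vec_def L2_set_def scalar_prod_def
  by (simp add: atLeast0LessThan power2_eq_square)

lemma norm2_vec_nonneg: "0 \<le> norm2_vec x"
  by (simp add: norm2_vec_eq_L2_set)

lemma abs_vec_index_le_norm2_vec:
  assumes "i < dim_vec x"
  shows "\<bar>x $ i\<bar> \<le> norm2_vec x"
proof -
  have "L2_set (\<lambda>j. \<bar>x $ j\<bar>) {..<dim_vec x} = norm2_vec x"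
    by (simp add: norm2_vec_eq_L2_set L2_set_def)
  then show ?thesis
    using member_le_L2_set[of "{..<dim_vec x}" i "\<lambda>j. \<bar>x $ j\<bar>"] assms by simp
qed

lemma scalar_prod_eq_0_if_disjoint_supp:
  assumes "u \<in> carrier_vec d" "v \<in> carrier_vec d" "supp_vec u \<inter> supp_vec v = {}"
  shows "u \<bullet> v = 0"
  unfolding scalar_prod_def
  using assms by (intro sum.neutral) (auto simp: supp_vec_def)

lemma scalar_prod_mult_mat_vec_orthonormal_rows:
  fixes D E :: "real mat"
  assumes D: "D \<in> carrier_mat n d" and E: "E \<in> carrier_mat k d" and nkd: "n + k = d"
    and DD: "D * D\<^sup>T = 1\<^sub>m n" and ED: "E * D\<^sup>T = 0\<^sub>m k n" and EE: "E * E\<^sup>T = 1\<^sub>m k"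
    and x: "x \<in> carrier_vec d" and y: "y \<in> carrier_vec d"
  shows "(D *\<^sub>v x) \<bullet> (D *\<^sub>v y) + (E *\<^sub>v x) \<bullet> (E *\<^sub>v y) = x \<bullet> y"
proof -
  let ?M = "D @\<^sub>r E"
  have M: "?M \<in> carrier_mat d d" using D E nkd by auto
  have DE: "D * E\<^sup>T = 0\<^sub>m n k"
    using arg_cong[OF ED, of transpose_mat] transpose_mult[OF E, of "D\<^sup>T"] D by simp
  have "?M * ?M\<^sup>T = 1\<^sub>m d"
  proof -
    have "?M\<^sup>T = four_block_mat D\<^sup>T E\<^sup>T (0\<^sub>m 0 n) (0\<^sub>m 0 k)"
      using D E unfolding append_rows_def
      by (simp add: transpose_four_block_mat[OF D zero_carrier_mat E zero_carrier_mat])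
    then have "?M * ?M\<^sup>T = four_block_mat (1\<^sub>m n) (0\<^sub>m n k) (0\<^sub>m k n) (1\<^sub>m k)"
      unfolding append_rows_def using D E
      by (simp add: mult_four_block_mat[of _ n d _ 0 _ k _ _ n _ k] DD ED DE EE)
    then show ?thesis using nkd by simp
  qed
  then have MtM: "?M\<^sup>T * ?M = 1\<^sub>m d"
    using mat_mult_left_right_inverse[OF M] M by auto
  have "(?M *\<^sub>v x) \<bullet> (?M *\<^sub>v y) = (?M\<^sup>T *\<^sub>v (?M *\<^sub>v x)) \<bullet> y"
    using transpose_vec_mult_scalar[OF M y, of "?M *\<^sub>v x"] M x by simp
  also have "\<dots> = x \<bullet> y"
    using assoc_mult_mat_vec[of "?M\<^sup>T" d d ?M d x, symmetric] M x MtM by simp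
  finally show ?thesis
    using D E x y by (simp add: mat_mult_append scalar_prod_append[of _ n _ k])
qed

lemma abs_scalar_prod_mult_mat_vec_le:
  fixes G :: "real mat"
  assumes G: "G \<in> carrier_mat k d" and x: "x \<in> carrier_vec d" and y: "y \<in> carrier_vec k"
  shows "\<bar>(G *\<^sub>v x) \<bullet> y\<bar> \<le> (\<Sum>i<k. \<Sum>j<d. \<bar>G $$ (i, j)\<bar>) * norm2_vec x * norm2_vec y"
proof -
  have "(G *\<^sub>v x) \<bullet> y = (\<Sum>i<k. \<Sum>j<d. G $$ (i, j) * x $ j * y $ i)"
    using G x y by (simp add: scalar_prod_def row_def atLeast0LessThan sum_distrib_right)
  also have "\<bar>\<dots>\<bar> \<le> (\<Sum>i<k. \<Sum>j<d. \<bar>G $$ (i, j)\<bar> * \<bar>x $ j\<bar> * \<bar>y $ i\<bar>)"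
    by (rule order.trans[OF sum_abs sum_mono], rule order.trans[OF sum_abs])
      (simp add: abs_mult)
  also have "\<dots> \<le> (\<Sum>i<k. \<Sum>j<d. \<bar>G $$ (i, j)\<bar> * norm2_vec x * norm2_vec y)"
    using x y abs_vec_index_le_norm2_vec norm2_vec_nonneg
    by (intro sum_mono mult_mono mult_left_mono) auto
  finally show ?thesis by (simp add: sum_distrib_right)
qed

definition defect_mat :: "real mat \<Rightarrow> real mat \<Rightarrow> real mat" where
  "defect_mat A D = D\<^sup>T * (A\<^sup>T * (A * D)) - D\<^sup>T * D"

lemma defect_mat_carrier:
  "A \<in> carrier_mat m n \<Longrightarrow> D \<in> carrier_mat n d \<Longrightarrow> defect_mat A D \<in> carrier_mat d d"
  unfolding defect_mat_def by auto

lemma scalar_prod_defect_mat: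
  fixes A D :: "real mat"
  assumes A: "A \<in> carrier_mat m n" and D: "D \<in> carrier_mat n d"
    and x: "x \<in> carrier_vec d" and y: "y \<in> carrier_vec d"
  shows "(A *\<^sub>v (D *\<^sub>v x)) \<bullet> (A *\<^sub>v (D *\<^sub>v y)) - (D *\<^sub>v x) \<bullet> (D *\<^sub>v y)
    = (defect_mat A D *\<^sub>v x) \<bullet> y"
proof -
  have ADx: "A *\<^sub>v (D *\<^sub>v x) \<in> carrier_vec m" and Dx: "D *\<^sub>v x \<in> carrier_vec n"
    using A D x by auto
  have "(A *\<^sub>v (D *\<^sub>v x)) \<bullet> (A *\<^sub>v (D *\<^sub>v y)) = (D\<^sup>T *\<^sub>v (A\<^sup>T *\<^sub>v (A *\<^sub>v (D *\<^sub>v x)))) \<bullet> y"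
    using transpose_vec_mult_scalar[OF A _ ADx, of "D *\<^sub>v y"]
      transpose_vec_mult_scalar[OF D y, of "A\<^sup>T *\<^sub>v (A *\<^sub>v (D *\<^sub>v x))"] A D y ADx
    by auto
  moreover have "(D *\<^sub>v x) \<bullet> (D *\<^sub>v y) = (D\<^sup>T *\<^sub>v (D *\<^sub>v x)) \<bullet> y"
    using transpose_vec_mult_scalar[OF D y Dx] by simp
  moreover have "defect_mat A D *\<^sub>v x
      = D\<^sup>T *\<^sub>v (A\<^sup>T *\<^sub>v (A *\<^sub>v (D *\<^sub>v x))) - D\<^sup>T *\<^sub>v (D *\<^sub>v x)"
    unfolding defect_mat_def using A D x
    by (simp add: minus_mult_distrib_mat_vec[of _ d d] assoc_mult_mat_vec[of _ d n _ d]
        assoc_mult_mat_vec[of _ n m _ d] assoc_mult_mat_vec[of _ m n _ d])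
  ultimately show ?thesis
    using A D x y by (simp add: minus_scalar_prod_distrib[of _ d])
qed

definition D_ROC_bound :: "real mat \<Rightarrow> real mat \<Rightarrow> nat \<Rightarrow> nat \<Rightarrow> real \<Rightarrow> bool" where
  "D_ROC_bound A D s t c \<longleftrightarrow> c \<ge> 0 \<and>
     (\<forall>u v. u \<in> carrier_vec (dim_col D) \<longrightarrow> v \<in> carrier_vec (dim_col D) \<longrightarrow>
        sparse_vec s u \<longrightarrow> sparse_vec t v \<longrightarrow>
        \<bar>(A *\<^sub>v (D *\<^sub>v u)) \<bullet> (A *\<^sub>v (D *\<^sub>v v)) - (D *\<^sub>v u) \<bullet> (D *\<^sub>v v)\<bar>
          \<le> c * norm2_vec u * norm2_vec v)"

lemma D_ROC_eq_Inf: "D_ROC A D s t = Inf (Collect (D_ROC_bound A D s t))"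
  unfolding D_ROC_def D_ROC_bound_def by simp

lemma D_ROC_bound_exists:
  fixes A D :: "real mat"
  assumes A: "A \<in> carrier_mat m n" and D: "D \<in> carrier_mat n d"
  shows "\<exists>c. D_ROC_bound A D s t c"
proof -
  define G where "G = defect_mat A D"
  have G: "G \<in> carrier_mat d d" unfolding G_def using A D by (rule defect_mat_carrier)
  have "D_ROC_bound A D s t (\<Sum>i<d. \<Sum>j<d. \<bar>G $$ (i, j)\<bar>)"
    unfolding D_ROC_bound_def
  proof (intro conjI allI impI)
    fix x y :: "real vec" assume "x \<in> carrier_vec (dim_col D)" "y \<in> carrier_vec (dim_col D)"
    then show "\<bar>(A *\<^sub>v (D *\<^sub>v x)) \<bullet> (A *\<^sub>v (D *\<^sub>v y)) - (D *\<^sub>v x) \<bullet> (D *\<^sub>v y)\<bar>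
        \<le> (\<Sum>i<d. \<Sum>j<d. \<bar>G $$ (i, j)\<bar>) * norm2_vec x * norm2_vec y"
      using D scalar_prod_defect_mat[OF A D] abs_scalar_prod_mult_mat_vec_le[OF G] by (simp add: G_def)
  qed (simp add: sum_nonneg)
  then show ?thesis ..
qed

lemma D_ROC_nonneg:
  fixes A D :: "real mat"
  assumes "A \<in> carrier_mat m n" and "D \<in> carrier_mat n d"
  shows "0 \<le> D_ROC A D s t"
proof -
  obtain c where "D_ROC_bound A D s t c" using D_ROC_bound_exists[OF assms] ..
  then show ?thesis
    unfolding D_ROC_eq_Inf by (intro cInf_greatest) (auto simp only: mem_Collect_eq D_ROC_bound_def)
qed

lemma D_ROC_le:
  fixes A D :: "real mat"
  assumes A: "A \<in> carrier_mat m n" and D: "D \<in> carrier_mat n d"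
    and x: "x \<in> carrier_vec d" and y: "y \<in> carrier_vec d"
    and "sparse_vec s x" and "sparse_vec t y"
  shows "\<bar>(A *\<^sub>v (D *\<^sub>v x)) \<bullet> (A *\<^sub>v (D *\<^sub>v y)) - (D *\<^sub>v x) \<bullet> (D *\<^sub>v y)\<bar>
    \<le> D_ROC A D s t * norm2_vec x * norm2_vec y"
proof -
  define b where "b = \<bar>(A *\<^sub>v (D *\<^sub>v x)) \<bullet> (A *\<^sub>v (D *\<^sub>v y)) - (D *\<^sub>v x) \<bullet> (D *\<^sub>v y)\<bar>"
  define a where "a = norm2_vec x * norm2_vec y"
  have bound: "b \<le> c * a" if "D_ROC_bound A D s t c" for c
    using that assms unfolding D_ROC_bound_def a_def b_def by (auto simp: mult.assoc)
  obtain c0 where c0: "D_ROC_bound A D s t c0" using D_ROC_bound_exists[OF A D] ..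
  show ?thesis
  proof (cases "a = 0")
    case True
    have "0 \<le> D_ROC A D s t * norm2_vec x * norm2_vec y"
      by (simp add: D_ROC_nonneg[OF A D] norm2_vec_nonneg)
    then show ?thesis using bound[OF c0] True by (simp add: b_def)
  next
    case False
    moreover have "a \<ge> 0" by (simp add: a_def norm2_vec_nonneg)
    ultimately have "a > 0" by simp
    then have "b / a \<le> D_ROC A D s t"
      unfolding D_ROC_eq_Inf using c0 bound
      by (intro cInf_greatest) (auto simp: pos_divide_le_eq)
    with \<open>a > 0\<close> show ?thesis by (simp add: pos_divide_le_eq a_def b_def mult.assoc)
  qed
qed

lemma sum_abs_le_sqrt_card_mult_L2_set:
  "(\<Sum>i\<in>S. \<bar>f i\<bar>) \<le> sqrt (card S) * L2_set f S"
  using L2_set_mult_ineq[of f "\<lambda>_. 1" S] by (simp add: L2_set_constant mult.commute)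

lemma exists_top_subset:
  fixes g :: "nat \<Rightarrow> real"
  assumes I: "finite I" and s: "s \<le> card I"
  shows "\<exists>S\<subseteq>I. card S = s \<and> (\<forall>i\<in>S. \<forall>j\<in>I - S. g j \<le> g i)"
proof -
  define F where "F = {S. S \<subseteq> I \<and> card S = s}"
  have F: "finite (sum g ` F)" "sum g ` F \<noteq> {}"
    using I obtain_subset_with_card_n[OF s] by (auto simp: F_def)
  obtain S where S: "S \<in> F" and S_max: "sum g S = Max (sum g ` F)"
    using Max_in[OF F] by auto
  have "g j \<le> g i" if i: "i \<in> S" and j: "j \<in> I - S" for i j
  proof -
    have S_fin: "finite S" using S I finite_subset unfolding F_def by auto
    have "card (insert j (S - {i})) = card S"
      using i j S_fin card_Suc_Diff1[of S i] by simp
    then have "insert j (S - {i}) \<in> F" using S i j unfolding F_def by auto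
    then have "sum g (insert j (S - {i})) \<le> sum g S"
      using S_max F(1) by simp
    then show ?thesis using i j S_fin by (simp add: sum_diff1)
  qed
  then show ?thesis using S unfolding F_def by blast
qed

lemma sum_mult_le_top_subset:
  fixes g a :: "nat \<Rightarrow> real" and \<eta> :: real
  assumes I: "finite I" and SI: "S \<subseteq> I"
    and top: "\<forall>i\<in>S. \<forall>j\<in>I - S. g j \<le> g i" and g: "\<forall>i\<in>I. 0 \<le> g i"
    and a: "\<forall>i\<in>I. 0 \<le> a i \<and> a i \<le> \<eta>" and a_sum: "sum a I \<le> real (card S) * \<eta>"
  shows "(\<Sum>i\<in>I. g i * a i) \<le> \<eta> * sum g S"
proof (cases "S = {}")
  case True
  then have "sum a I = 0" using a a_sum by (simp add: antisym sum_nonneg)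
  then have "\<forall>i\<in>I. a i = 0" using a I by (simp add: sum_nonneg_eq_0_iff)
  then show ?thesis by (simp add: True)
next
  case False
  have S_fin: "finite S" using I SI finite_subset by auto
  define t where "t = Min (g ` S)"
  have t_le: "\<forall>i\<in>S. t \<le> g i" using S_fin by (simp add: t_def)
  have "t \<in> g ` S" unfolding t_def using S_fin False by simp
  then obtain i0 where "i0 \<in> S" "t = g i0" by auto
  then have t_ge: "\<forall>j\<in>I - S. g j \<le> t" and t: "0 \<le> t" using top g SI by auto
  have "(\<Sum>i\<in>I - S. g i * a i) \<le> (\<Sum>i\<in>I - S. t * a i)"
    using t_ge a by (intro sum_mono mult_right_mono) auto
  also have "\<dots> = t * (sum a I - sum a S)"
    by (simp add: sum_distrib_left[symmetric] sum_diff[OF I SI])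
  also have "\<dots> \<le> t * (\<Sum>i\<in>S. \<eta> - a i)"
    using a_sum t by (intro mult_left_mono) (simp_all add: sum_subtractf)
  also have "\<dots> \<le> (\<Sum>i\<in>S. g i * (\<eta> - a i))"
    unfolding sum_distrib_left using t_le a SI by (intro sum_mono mult_right_mono) auto
  finally have "(\<Sum>i\<in>I. g i * a i) \<le> (\<Sum>i\<in>S. g i * (\<eta> - a i)) + (\<Sum>i\<in>S. g i * a i)"
    using sum.subset_diff[OF SI I, of "\<lambda>i. g i * a i"] by simp
  then show ?thesis by (simp add: sum.distrib[symmetric] sum_distrib_left algebra_simps)
qed

lemma abs_vec_index_le_norminf_vec:
  assumes "i < dim_vec x"
  shows "\<bar>x $ i\<bar> \<le> norminf_vec x"
  unfolding norminf_vec_def using assms by (intro Max_ge) auto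

lemma norm1_vec_le_of_norm1_minus_norm2_le:
  fixes v :: "real vec" and s \<eta> :: real
  assumes \<eta>: "0 \<le> \<eta>" and s: "1 \<le> s" and v_inf: "norminf_vec v \<le> \<eta>"
    and gap: "norm1_vec v - norm2_vec v \<le> (s - sqrt s) * \<eta>"
  shows "norm1_vec v \<le> s * \<eta>"
proof -
  define r where "r = sqrt s"
  have r: "1 \<le> r" "r\<^sup>2 = s" using s by (simp_all add: r_def)
  have gap_r: "norm1_vec v \<le> norm2_vec v + (r\<^sup>2 - r) * \<eta>"
    using gap by (simp add: r r_def[symmetric])
  have "(norm2_vec v)\<^sup>2 = (\<Sum>i<dim_vec v. \<bar>v $ i\<bar> * \<bar>v $ i\<bar>)"
    by (simp add: norm2_vec_eq_L2_set L2_set_def power2_eq_square abs_of_nonneg sum_nonneg)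
  also have "\<dots> \<le> (\<Sum>i<dim_vec v. \<bar>v $ i\<bar> * \<eta>)"
    using abs_vec_index_le_norminf_vec v_inf
    by (intro sum_mono mult_left_mono) (auto intro: order.trans)
  finally have sq: "(norm2_vec v)\<^sup>2 \<le> \<eta> * norm1_vec v"
    by (simp add: norm1_vec_def sum_distrib_left mult.commute)
  have "norm2_vec v \<le> r * \<eta>"
  proof (rule ccontr)
    assume "\<not> norm2_vec v \<le> r * \<eta>"
    moreover have "0 \<le> r * \<eta>" "0 \<le> (r - 1) * \<eta>" using r \<eta> by simp_all
    ultimately have "0 < (norm2_vec v - r * \<eta>) * (norm2_vec v + (r - 1) * \<eta>)"
      by (intro mult_pos_pos) linarith+
    also have "\<dots> = (norm2_vec v)\<^sup>2 - \<eta> * (norm2_vec v + (r\<^sup>2 - r) * \<eta>)"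
      by (simp add: algebra_simps power2_eq_square)
    also have "\<dots> \<le> 0"
      using sq mult_left_mono[OF gap_r \<eta>] by linarith
    finally show False by simp
  qed
  then show ?thesis using gap_r r by (simp add: power2_eq_square algebra_simps)
qed

definition restrict_vec :: "nat set \<Rightarrow> real vec \<Rightarrow> real vec" where
  "restrict_vec S x = vec (dim_vec x) (\<lambda>i. if i \<in> S then x $ i else 0)"

lemma restrict_vec_carrier: "restrict_vec S x \<in> carrier_vec (dim_vec x)"
  by (simp add: restrict_vec_def)

lemma sparse_restrict_vec: "finite S \<Longrightarrow> sparse_vec (card S) (restrict_vec S x)"
  unfolding sparse_vec_def supp_vec_def restrict_vec_def
  by (rule card_mono) (auto split: if_splits)

lemma scalar_prod_restrict_vec:
  assumes "S \<subseteq> {..<dim_vec x}"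
  shows "x \<bullet> restrict_vec S x = (\<Sum>i\<in>S. (x $ i)\<^sup>2)"
    and "restrict_vec S x \<bullet> restrict_vec S x = (\<Sum>i\<in>S. (x $ i)\<^sup>2)"
  using assms
  by (simp_all add: restrict_vec_def scalar_prod_def atLeast0LessThan if_distrib
      sum.inter_restrict[symmetric] Int_absorb1 power2_eq_square cong: if_cong)

lemma abs_scalar_prod_le_of_sparse_test:
  fixes g v :: "real vec" and \<eta> c :: real
  assumes g: "g \<in> carrier_vec d" and v: "v \<in> carrier_vec d" and s: "s \<le> d"
    and \<eta>: "0 \<le> \<eta>" and v_inf: "norminf_vec v \<le> \<eta>" and v_1: "norm1_vec v \<le> s * \<eta>"
    and c: "0 \<le> c"
    and test: "\<And>w. w \<in> carrier_vec d \<Longrightarrow> sparse_vec s w \<Longrightarrow> g \<bullet> w \<le> c * norm2_vec w"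
  shows "\<bar>g \<bullet> v\<bar> \<le> \<eta> * sqrt s * c"
proof -
  obtain S where S: "S \<subseteq> {..<d}" "card S = s"
    and top: "\<forall>i\<in>S. \<forall>j\<in>{..<d} - S. \<bar>g $ j\<bar> \<le> \<bar>g $ i\<bar>"
    using exists_top_subset[of "{..<d}" s "\<lambda>i. \<bar>g $ i\<bar>"] s by auto
  have S_fin: "finite S" using S(1) finite_subset by blast
  define gS where "gS = L2_set (($) g) S"
  have gS_le: "gS \<le> c"
  proof -
    let ?w = "restrict_vec S g"
    have "?w \<in> carrier_vec d" "sparse_vec s ?w"
      using restrict_vec_carrier[of S g] sparse_restrict_vec[OF S_fin, of g] g S(2) by auto
    moreover have "g \<bullet> ?w = gS * gS" "norm2_vec ?w = gS"
      using scalar_prod_restrict_vec[of S g] g S(1)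
      by (simp_all add: gS_def L2_set_def norm2_vec_def sum_nonneg)
    ultimately have "gS * gS \<le> c * gS" using test by metis
    then show ?thesis
      using c by (cases "gS = 0") (simp_all add: gS_def order_less_le mult_le_cancel_right)
  qed
  have v_abs: "\<bar>v $ i\<bar> \<le> \<eta>" if "i < d" for i
    using abs_vec_index_le_norminf_vec[of i v] v v_inf that by simp
  have "\<bar>g \<bullet> v\<bar> \<le> (\<Sum>i<d. \<bar>g $ i\<bar> * \<bar>v $ i\<bar>)"
    using v by (simp add: scalar_prod_def atLeast0LessThan abs_mult[symmetric] sum_abs)
  also have "\<dots> \<le> \<eta> * (\<Sum>i\<in>S. \<bar>g $ i\<bar>)"
    using S top v v_abs v_1 by (intro sum_mult_le_top_subset) (auto simp: norm1_vec_def)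
  also have "\<dots> \<le> \<eta> * (sqrt s * gS)"
    using sum_abs_le_sqrt_card_mult_L2_set[of "($) g" S] \<eta> S(2)
    by (intro mult_left_mono) (simp_all add: gS_def)
  also have "\<dots> \<le> \<eta> * sqrt s * c"
    using gS_le \<eta> by (simp add: mult_left_mono mult.assoc)
  finally show ?thesis .
qed

theorem proposition2:
  fixes n d m s1 s2 :: nat and \<eta> :: real
    and D Dbar A :: "real mat" and u v :: "real vec"
  assumes "n \<le> d"
    and "D \<in> carrier_mat n d" and "D * D\<^sup>T = 1\<^sub>m n"
    and "Dbar \<in> carrier_mat (d - n) d"
    and "Dbar * D\<^sup>T = 0\<^sub>m (d - n) n" and "Dbar * Dbar\<^sup>T = 1\<^sub>m (d - n)"
    and "A \<in> carrier_mat m n"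
    and "0 < s1" and "0 < s2" and "s1 \<le> n" and "s2 \<le> n"
    and "\<eta> > 0"
    and "u \<in> carrier_vec d" and "v \<in> carrier_vec d"
    and "supp_vec u \<inter> supp_vec v = {}"
    and "sparse_vec s1 u"
    and "norm1_vec v - norm2_vec v \<le> (real s2 - sqrt (real s2)) * \<eta>"
    and "norminf_vec v \<le> \<eta>"
  shows "\<bar>(A *\<^sub>v (D *\<^sub>v u)) \<bullet> (A *\<^sub>v (D *\<^sub>v v)) + (Dbar *\<^sub>v u) \<bullet> (Dbar *\<^sub>v v)\<bar>
           \<le> (1 + sqrt 2 / 2) * \<eta> * sqrt (real s2) * D_ROC A D s1 s2 * norm2_vec u"
proof -
  note D = assms(2) and A = assms(7) and u = assms(13) and v = assms(14)
  define \<theta> where "\<theta> = D_ROC A D s1 s2"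
  define g where "g = defect_mat A D *\<^sub>v u"
  have g: "g \<in> carrier_vec d" using defect_mat_carrier[OF A D] u by (simp add: g_def)
  have \<theta>u: "0 \<le> \<theta> * norm2_vec u" by (simp add: \<theta>_def D_ROC_nonneg[OF A D] norm2_vec_nonneg)
  have "(A *\<^sub>v (D *\<^sub>v u)) \<bullet> (A *\<^sub>v (D *\<^sub>v v)) + (Dbar *\<^sub>v u) \<bullet> (Dbar *\<^sub>v v) = g \<bullet> v"
    using scalar_prod_mult_mat_vec_orthonormal_rows[of D n d Dbar "d - n" u v]
      scalar_prod_eq_0_if_disjoint_supp[OF u v] scalar_prod_defect_mat[OF A D u v] assms
    by (simp add: g_def)
  moreover have "\<bar>g \<bullet> v\<bar> \<le> \<eta> * sqrt s2 * (\<theta> * norm2_vec u)"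
  proof (rule abs_scalar_prod_le_of_sparse_test[OF g v _ _ _ _ \<theta>u])
    show "norm1_vec v \<le> s2 * \<eta>"
      using norm1_vec_le_of_norm1_minus_norm2_le assms by simp
    show "g \<bullet> w \<le> \<theta> * norm2_vec u * norm2_vec w"
      if "w \<in> carrier_vec d" "sparse_vec s2 w" for w
      using D_ROC_le[OF A D u that(1) assms(16) that(2)] scalar_prod_defect_mat[OF A D u that(1)]
      by (simp add: g_def \<theta>_def)
  qed (use assms in auto)
  moreover have "0 \<le> \<eta> * sqrt s2 * (\<theta> * norm2_vec u)"
    using \<theta>u assms(12) by simp
  ultimately show ?thesis
    by (simp add: \<theta>_def mult.assoc distrib_right add_increasing2)
qed

end
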